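(* Let $P$ be any program of the imperative language described in the context (a sequential composition of commands over the variables $X_1,\dots,X_n$). Then there exist a unique $p\in\mathbb{N}$ and a unique $n\times n$ matrix $M$ with coefficients in $\{0,1,2\}^p\to\mathrm{mwp}^{\infty}$ such that $\vdash P : M$ is derivable in the deterministic flow calculus described in the context.
   Context: Language. Variables range over $X_1,\dots,X_n$ (a fixed finite set of program variables), and $b$ ranges over boolean expressions (left unspecified; they play no role in the analysis). Expressions are $e ::= X \mid X - Y \mid X + Y \mid X * Y$ (with $X,Y$ variables), and commands are $C ::= X = e \mid \texttt{if } b \texttt{ then } C \texttt{ else } C \mid \texttt{while } b \texttt{ do } \{C\} \mid \texttt{loop } X \{C\} \mid C;C$, where $\texttt{loop } X\{C\}$ means "execute $C$ $X$ times" and $C;C$ is sequential composition. A program is a series of commands composed sequentially. The semi-ring $\mathrm{mwp}^{\infty}$. Its carrier is $\{0,m,w,p,\infty\}$ totally ordered by $0<m<w<p<\infty$; addition is $\max$; multiplication is $\alpha\times\beta=0$ if $\alpha,\beta\neq\infty$ and one of them is $0$, and $\alpha\times\beta=\max(\alpha,\beta)$ otherwise (so $\infty\times 0=\infty$). The zero is $0$ and the unit is $m$. For a set $A$, $A\to\mathrm{mwp}^{\infty}$ denotes the semi-ring of functions $A\to\mathrm{mwp}^{\infty}$ with pointwise addition and multiplication; constants $\alpha\in\mathrm{mwp}^\infty$ are identified with constant functions. Matrices: $n\times n$ matrices over a semi-ring with componentwise sum $\oplus$, the usual matrix product $\otimes$, unit $\mathbf{1}$ (diagonal entries $m$, other entries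 $0$), and closure $M^*=\mathbf{1}\oplus M\oplus M^2\oplus\cdots$. For $\vec a\in\{0,1,2\}^p$ and a matrix $M$ with coefficients in $\{0,1,2\}^p\to\mathrm{mwp}^\infty$, $M[\vec a]$ is the matrix over $\mathrm{mwp}^\infty$ obtained by evaluating every coefficient at $\vec a$. For $i\in\{0,1,2\}$ and a choice index $k$, $\delta(i,k)$ is the function sending $\vec a$ to $m$ if $a_k=i$ and to $0$ otherwise. Vectors: $\{^{\alpha}_i\}$ is the column $n$-vector with $\alpha$ in row $i$ and $0$ elsewhere, and $\{^{\alpha}_i,^{\beta}_j\}=\{^{\alpha}_i\}\oplus\{^{\beta}_j\}$; $\mathbf{1}\xleftarrow{j}V$ is the unit matrix whose $j$-th column is replaced by $V$; $\{^{\alpha}_i\to j\}$ is the matrix with $\alpha$ at row $i$, column $j$ and $0$ elsewhere. Deterministic calculus (judgements $\vdash e:V$ and $\vdash C:M$). Each application of rule E$^{A}$ in the derivation of a program is assigned its own choice index $k\in\{1,\dots,p\}$ (distinct applications receive distinct indices, $p$ being the total number of such applications), and all coefficients are regarded as functions of $\vec a\in\{0,1,2\}^p$. (E$^{A}$) for $\star\in\{+,-\}$: $\vdash X_i\star X_j : \delta(0,k)\{^m_i,^p_j\}\oplus\delta(1,k)\{^p_i,^m_j\}\oplus\delta(2,k)\{^w_i,^w_j\}$, with $k$ the choice index of this application. (E$^{M}$) $\vdash X_i * X_j : \{^w_i,^w_j\}$. (E$^{S}$) $\vdash X_i : \{^m_i\}$. (A) from $\vdash e:V$ infer $\vdash X_j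 = e : \mathbf{1}\xleftarrow{j}V$. (C) from $\vdash C_1:M_1$ and $\vdash C_2:M_2$ infer $\vdash C_1;C_2 : M_1\otimes M_2$. (I) from $\vdash C_1:M_1$ and $\vdash C_2:M_2$ infer $\vdash \texttt{if } b \texttt{ then } C_1 \texttt{ else } C_2 : M_1\oplus M_2$. (L$^{\infty}$) from $\vdash C:M$ infer $\vdash \texttt{loop } X_l\{C\} : M^*\oplus\{^{\infty}_j\to j \mid M^*_{jj}\neq m\}\oplus\{^{p}_l\to j\mid \exists i,\ M^*_{ij}=p\}$. (W$^{\infty}$) from $\vdash C:M$ infer $\vdash \texttt{while } b \texttt{ do }\{C\} : M^*\oplus\{^{\infty}_j\to j \mid M^*_{jj}\neq m\}\oplus\{^{\infty}_i\to j\mid M^*_{ij}=p\}$. (In L$^\infty$ and W$^\infty$, the conditions on coefficients are understood pointwise, for each choice assignment.) *)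

theory Defs
  imports Main
begin

datatype mwp = Zr | Mv | Wv | Pv | Inf

fun mwp_rank :: "mwp \<Rightarrow> nat" where
  "mwp_rank Zr = 0" | "mwp_rank Mv = 1" | "mwp_rank Wv = 2" | "mwp_rank Pv = 3"
| "mwp_rank Inf = 4"

instantiation mwp :: linorder
begin
definition less_eq_mwp :: "mwp \<Rightarrow> mwp \<Rightarrow> bool" where
  "less_eq_mwp a b \<longleftrightarrow> mwp_rank a \<le> mwp_rank b"
definition less_mwp :: "mwp \<Rightarrow> mwp \<Rightarrow> bool" where
  "less_mwp a b \<longleftrightarrow> mwp_rank a < mwp_rank b"
instance
proof
  fix x y z :: mwp
  show "(x < y) = (x \<le> y \<and> \<not> y \<le> x)" by (auto simp: less_eq_mwp_def less_mwp_def)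
  show "x \<le> x" by (simp add: less_eq_mwp_def)
  show "x \<le> y \<Longrightarrow> y \<le> z \<Longrightarrow> x \<le> z" by (simp add: less_eq_mwp_def)
  show "x \<le> y \<Longrightarrow> y \<le> x \<Longrightarrow> x = y"
    by (cases x; cases y; simp add: less_eq_mwp_def)
  show "x \<le> y \<or> y \<le> x" by (auto simp: less_eq_mwp_def)
qed
end

definition mplus :: "mwp \<Rightarrow> mwp \<Rightarrow> mwp" where
  "mplus a b = max a b"

definition mtimes :: "mwp \<Rightarrow> mwp \<Rightarrow> mwp" where
  "mtimes a b = (if a \<noteq> Inf \<and> b \<noteq> Inf \<and> (a = Zr \<or> b = Zr) then Zr else max a b)"

definition msum :: "'a set \<Rightarrow> ('a \<Rightarrow> mwp) \<Rightarrow> mwp" where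
  "msum A f = Max (insert Zr (f ` A))"

type_synonym 'n mat = "'n \<Rightarrow> 'n \<Rightarrow> mwp"

definition mat_one :: "'n mat" where
  "mat_one i j = (if i = j then Mv else Zr)"

definition mat_mult :: "'n::finite mat \<Rightarrow> 'n mat \<Rightarrow> 'n mat" where
  "mat_mult A B i j = msum UNIV (\<lambda>k. mtimes (A i k) (B k j))"

fun mat_pow :: "'n::finite mat \<Rightarrow> nat \<Rightarrow> 'n mat" where
  "mat_pow A 0 = mat_one"
| "mat_pow A (Suc k) = mat_mult (mat_pow A k) A"

text \<open>Closure \<open>A* = 1 \<oplus> A \<oplus> A^2 \<oplus> ...\<close>: the infinite sum (w.r.t. max) is the
  maximum of the (finitely many) values taken by the powers.\<close>
definition mat_star :: "'n::finite mat \<Rightarrow> 'n mat" where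
  "mat_star A i j = Max (range (\<lambda>k. mat_pow A k i j))"

text \<open>A choice vector \<open>a \<in> {0,1,2}^p\<close> is a list of length p with entries \<le> 2;
  its k-th component (k = 1..p) is \<open>a ! (k - 1)\<close>.\<close>
type_synonym coef = "nat list \<Rightarrow> mwp"
type_synonym 'n cvec = "'n \<Rightarrow> coef"
type_synonym 'n cmat = "'n \<Rightarrow> 'n \<Rightarrow> coef"

definition choices :: "nat \<Rightarrow> nat list set" where
  "choices p = {a. length a = p \<and> (\<forall>x\<in>set a. x \<le> 2)}"

definition delta :: "nat \<Rightarrow> nat \<Rightarrow> coef" where
  "delta i k a = (if a ! (k - 1) = i then Mv else Zr)"

definition cscale :: "coef \<Rightarrow> 'n cvec \<Rightarrow> 'n cvec" where
  "cscale c V r a = mtimes (c a) (V r a)"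

definition vplus :: "'n cvec \<Rightarrow> 'n cvec \<Rightarrow> 'n cvec" where
  "vplus U V r a = mplus (U r a) (V r a)"

definition vsingle :: "'n \<Rightarrow> mwp \<Rightarrow> 'n cvec" where
  "vsingle i \<alpha> r a = (if r = i then \<alpha> else Zr)"

definition vpair :: "'n \<Rightarrow> mwp \<Rightarrow> 'n \<Rightarrow> mwp \<Rightarrow> 'n cvec" where
  "vpair i \<alpha> j \<beta> = vplus (vsingle i \<alpha>) (vsingle j \<beta>)"

definition cmat_one :: "'n cmat" where
  "cmat_one i j a = mat_one i j"

definition col_upd :: "'n \<Rightarrow> 'n cvec \<Rightarrow> 'n cmat" where
  "col_upd j V r c = (if c = j then V r else cmat_one r c)"

definition cmat_plus :: "'n cmat \<Rightarrow> 'n cmat \<Rightarrow> 'n cmat" where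
  "cmat_plus A B i j a = mplus (A i j a) (B i j a)"

definition eval_at :: "'n cmat \<Rightarrow> nat list \<Rightarrow> 'n mat" where
  "eval_at A a i j = A i j a"

definition cmat_mult :: "'n::finite cmat \<Rightarrow> 'n cmat \<Rightarrow> 'n cmat" where
  "cmat_mult A B i j a = mat_mult (eval_at A a) (eval_at B a) i j"

definition cmat_star :: "'n::finite cmat \<Rightarrow> 'n cmat" where
  "cmat_star A i j a = mat_star (eval_at A a) i j"

definition loop_mat :: "'n \<Rightarrow> 'n::finite cmat \<Rightarrow> 'n cmat" where
  "loop_mat l A i j a =
     (let S = cmat_star A in
      mplus (mplus (S i j a) (if i = j \<and> S j j a \<noteq> Mv then Inf else Zr))
            (if i = l \<and> (\<exists>i'. S i' j a = Pv) then Pv else Zr))"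

definition while_mat :: "'n::finite cmat \<Rightarrow> 'n cmat" where
  "while_mat A i j a =
     (let S = cmat_star A in
      mplus (mplus (S i j a) (if i = j \<and> S j j a \<noteq> Mv then Inf else Zr))
            (if S i j a = Pv then Inf else Zr))"

text \<open>Program variables are the elements of a finite type \<open>'n\<close> (X_1..X_n);
  boolean expressions are of an arbitrary type \<open>'b\<close> (they play no role).\<close>
datatype 'n expr = EVar 'n | EMinus 'n 'n | EPlus 'n 'n | ETimes 'n 'n

datatype ('n, 'b) cmd =
    Assign 'n "'n expr"
  | If 'b "('n, 'b) cmd" "('n, 'b) cmd"
  | While 'b "('n, 'b) cmd"
  | Loop 'n "('n, 'b) cmd"
  | Seq "('n, 'b) cmd" "('n, 'b) cmd"

text \<open>\<open>expr_der k e k' V\<close>: \<open>\<turnstile> e : V\<close>, where the applications of E^A in this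
  derivation receive the choice indices k+1, ..., k' (left-to-right numbering).\<close>
inductive expr_der :: "nat \<Rightarrow> 'n expr \<Rightarrow> nat \<Rightarrow> 'n cvec \<Rightarrow> bool" where
  EA_minus: "expr_der k (EMinus i j) (Suc k)
     (vplus (vplus (cscale (delta 0 (Suc k)) (vpair i Mv j Pv))
                   (cscale (delta 1 (Suc k)) (vpair i Pv j Mv)))
            (cscale (delta 2 (Suc k)) (vpair i Wv j Wv)))"
| EA_plus: "expr_der k (EPlus i j) (Suc k)
     (vplus (vplus (cscale (delta 0 (Suc k)) (vpair i Mv j Pv))
                   (cscale (delta 1 (Suc k)) (vpair i Pv j Mv)))
            (cscale (delta 2 (Suc k)) (vpair i Wv j Wv)))"
| EM: "expr_der k (ETimes i j) k (vpair i Wv j Wv)"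
| ES: "expr_der k (EVar i) k (vsingle i Mv)"

inductive cmd_der :: "nat \<Rightarrow> ('n::finite, 'b) cmd \<Rightarrow> nat \<Rightarrow> 'n cmat \<Rightarrow> bool" where
  A: "expr_der k e k' V \<Longrightarrow> cmd_der k (Assign j e) k' (col_upd j V)"
| C: "cmd_der k C1 k1 M1 \<Longrightarrow> cmd_der k1 C2 k2 M2 \<Longrightarrow>
      cmd_der k (Seq C1 C2) k2 (cmat_mult M1 M2)"
| I: "cmd_der k C1 k1 M1 \<Longrightarrow> cmd_der k1 C2 k2 M2 \<Longrightarrow>
      cmd_der k (If b C1 C2) k2 (cmat_plus M1 M2)"
| L: "cmd_der k C k' M \<Longrightarrow> cmd_der k (Loop l C) k' (loop_mat l M)"
| W: "cmd_der k C k' M \<Longrightarrow> cmd_der k (While b C) k' (while_mat M)"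

definition derivable :: "('n::finite, 'b) cmd \<Rightarrow> nat \<Rightarrow> 'n cmat \<Rightarrow> bool" where
  "derivable P p M \<longleftrightarrow> cmd_der 0 P p M"

end

theory Submission
  imports Defs
begin

text \<open>The calculus is syntax-directed: exactly one rule applies to each expression and command,
  and the conclusion of every rule, including the next free choice index, is a function of its
  premises. Existence and uniqueness of a derivation thus follow by structural induction, with
  the first free choice index generalised because sequencing and branching shift it for the
  second subcommand.\<close>

lemma expr_der_exists: "\<exists>k' V. expr_der k e k' V"
  by (cases e) (auto intro: expr_der.intros)

lemma expr_der_unique: "expr_der k e k1 V1 \<Longrightarrow> expr_der k e k2 V2 \<Longrightarrow> k1 = k2 \<and> V1 = V2"
  by (auto elim!: expr_der.cases)

lemma cmd_der_exists: "\<exists>k' M. cmd_der k (P :: ('n::finite, 'b) cmd) k' M"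
  by (induction P arbitrary: k) (meson cmd_der.intros expr_der_exists)+

lemma cmd_der_unique:
  "cmd_der k (P :: ('n::finite, 'b) cmd) k1 M1 \<Longrightarrow> cmd_der k P k2 M2 \<Longrightarrow> k1 = k2 \<and> M1 = M2"
  by (induction arbitrary: k2 M2 rule: cmd_der.induct)
    (erule cmd_der.cases; blast dest: expr_der_unique)+

theorem theorem9:
  fixes P :: "('n::finite, 'b) cmd"
  shows "\<exists>p M. derivable P p M \<and>
           (\<forall>p' M'. derivable P p' M' \<longrightarrow>
              p' = p \<and> (\<forall>a\<in>choices p. \<forall>i j. M' i j a = M i j a))"
proof -
  obtain p M where der: "cmd_der 0 P p M"
    using cmd_der_exists by blast
  then show ?thesis
    using cmd_der_unique[OF der] unfolding derivable_def by blast
qed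

end
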